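(* Let $\mathcal{A}=(\mathcal{H},|s_0\rangle,\Sigma,\{U_\sigma\},F)$ be a quantum automaton, $w\in\Sigma^\omega$ and $\lambda\in[0,1)$. Then $w\in\mathcal{L}^{>\lambda}(\mathcal{A}|\mathrm{D})$ if and only if there exist a real $\varepsilon>0$ and a unit vector $|\psi\rangle\in F$ such that $w=u_0u_1u_2\cdots$ with finite words $u_i$ satisfying: $u_0\in\mathcal{L}^{>\lambda+\varepsilon}(\mathcal{A}_{s_0,\psi}|\mathrm{MO})$, and $u_1,u_2,\ldots\in\mathcal{L}^{>\lambda+\varepsilon}(\mathcal{A}_{\psi,\psi}|\mathrm{MO})\setminus\{\epsilon\}$.
   Context: A quantum automaton is a tuple $\mathcal{A}=(\mathcal{H},|s_0\rangle,\Sigma,\{U_\sigma:\sigma\in\Sigma\},F)$ where $\mathcal{H}$ is a finite-dimensional complex Hilbert space, $|s_0\rangle$ a unit vector, $\Sigma$ a finite alphabet, each $U_\sigma$ unitary, and $F$ a subspace. For finite $x=\sigma_1\cdots\sigma_m$, $U_x=U_{\sigma_m}\cdots U_{\sigma_1}$ ($U_\epsilon=I$, $\epsilon$ the empty word); for a quantum automaton $\mathcal{C}$ with initial state $|c_0\rangle$ and accepting space $G$ (projection $P_G$), $f^{\mathrm{MO}}_{\mathcal{C}}(x)=\|P_GU_x|c_0\rangle\|^2$ and $\mathcal{L}^{>\mu}(\mathcal{C}|\mathrm{MO})=\{x\in\Sigma^*:f^{\mathrm{MO}}_{\mathcal{C}}(x)>\mu\}$. For unit vectors $|u\rangle,|v\rangle\in\mathcal{H}$,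 $\mathcal{A}_{u,v}=(\mathcal{H},|u\rangle,\Sigma,\{U_\sigma\},\mathrm{span}\{|v\rangle\})$, so $f^{\mathrm{MO}}_{\mathcal{A}_{u,v}}(x)=|\langle v|U_x|u\rangle|^2$. Disturbing acceptance: for $w=\sigma_1\sigma_2\cdots\in\Sigma^\omega$, a unit $|\psi\rangle\in F$ and checkpoints $0\le n_1<n_2<\cdots$, the disturbing run is $|s_0\rangle$ and for $n\ge1$: $|s_n\rangle=U_{\sigma_n}|\psi\rangle$ if $n-1=n_i$ for some $i$, else $|s_n\rangle=U_{\sigma_n}|s_{n-1}\rangle$; $f^{\mathrm{D}}_{\mathcal{A}}(w)=\sup_{|\psi\rangle}\sup_{\{n_i\}}\inf_{i\ge1}|\langle\psi|s_{n_i}\rangle|^2$ over unit $|\psi\rangle\in F$ and strictly increasing checkpoint sequences, and $\mathcal{L}^{>\lambda}(\mathcal{A}|\mathrm{D})=\{w\in\Sigma^\omega:f^{\mathrm{D}}_{\mathcal{A}}(w)>\lambda\}$. *)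

theory Defs
  imports "HOL-Analysis.Analysis"
begin

text \<open>Finite-dimensional complex Hilbert space: complex ^ 'n with 'n a finite index type.
  Hermitian inner product, antilinear in the first argument.\<close>
definition cinner :: "complex ^ 'n \<Rightarrow> complex ^ 'n \<Rightarrow> complex" where
  "cinner x y = (\<Sum>i\<in>UNIV. cnj (x $ i) * y $ i)"

definition cadjoint :: "complex ^ 'n ^ 'n \<Rightarrow> complex ^ 'n ^ 'n" where
  "cadjoint A = (\<chi> i j. cnj (A $ j $ i))"

definition unitary :: "complex ^ 'n ^ 'n \<Rightarrow> bool" where
  "unitary U \<longleftrightarrow> U ** cadjoint U = mat 1 \<and> cadjoint U ** U = mat 1"

definition csubspace :: "(complex ^ 'n) set \<Rightarrow> bool" where
  "csubspace F \<longleftrightarrow> 0 \<in> F \<and> (\<forall>x\<in>F. \<forall>y\<in>F. x + y \<in> F)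
     \<and> (\<forall>c::complex. \<forall>x\<in>F. c *s x \<in> F)"

definition run_word :: "('a \<Rightarrow> complex ^ 'n ^ 'n) \<Rightarrow> 'a list \<Rightarrow> complex ^ 'n \<Rightarrow> complex ^ 'n" where
  "run_word U x v = fold (\<lambda>\<sigma> s. U \<sigma> *v s) x v"

definition f_MO_uv :: "('a \<Rightarrow> complex ^ 'n ^ 'n) \<Rightarrow> complex ^ 'n \<Rightarrow> complex ^ 'n \<Rightarrow> 'a list \<Rightarrow> real" where
  "f_MO_uv U u v x = (cmod (cinner v (run_word U x u)))\<^sup>2"

definition L_MO_uv :: "('a \<Rightarrow> complex ^ 'n ^ 'n) \<Rightarrow> complex ^ 'n \<Rightarrow> complex ^ 'n \<Rightarrow> real \<Rightarrow> 'a list set" where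
  "L_MO_uv U u v \<mu> = {x. f_MO_uv U u v x > \<mu>}"

text \<open>Disturbing run. Infinite word w = w 0, w 1, ... (so sigma_n = w (n-1));
  checkpoints n_1 < n_2 < ... are ns 0 < ns 1 < ... .\<close>
fun drun :: "('a \<Rightarrow> complex ^ 'n ^ 'n) \<Rightarrow> complex ^ 'n \<Rightarrow> (nat \<Rightarrow> 'a) \<Rightarrow> complex ^ 'n
               \<Rightarrow> (nat \<Rightarrow> nat) \<Rightarrow> nat \<Rightarrow> complex ^ 'n" where
  "drun U s0 w psi ns 0 = s0"
| "drun U s0 w psi ns (Suc n) =
     U (w n) *v (if n \<in> range ns then psi else drun U s0 w psi ns n)"

text \<open>Disturbing acceptance value; the supremum over the empty set is taken to be 0
  (inserting 0 does not change the supremum otherwise, as all values are nonnegative).\<close>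
definition f_D :: "('a \<Rightarrow> complex ^ 'n ^ 'n) \<Rightarrow> complex ^ 'n \<Rightarrow> (complex ^ 'n) set \<Rightarrow> (nat \<Rightarrow> 'a) \<Rightarrow> real" where
  "f_D U s0 F w = Sup (insert 0
     {(INF i. (cmod (cinner psi (drun U s0 w psi ns (ns i))))\<^sup>2) | psi ns.
        psi \<in> F \<and> norm psi = 1 \<and> strict_mono ns})"

definition L_D :: "('a \<Rightarrow> complex ^ 'n ^ 'n) \<Rightarrow> complex ^ 'n \<Rightarrow> (complex ^ 'n) set \<Rightarrow> real \<Rightarrow> (nat \<Rightarrow> 'a) set" where
  "L_D U s0 F lam = {w. f_D U s0 F w > lam}"

text \<open>w is the infinite concatenation u 0 u 1 u 2 ...: every finite prefix concatenation
  u 0 @ ... @ u n is a prefix of w.\<close>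
definition is_concat :: "(nat \<Rightarrow> 'a) \<Rightarrow> (nat \<Rightarrow> 'a list) \<Rightarrow> bool" where
  "is_concat w u \<longleftrightarrow> (\<forall>n. let p = concat (map u [0..<Suc n]) in p = map w [0..<length p])"

end

theory Submission
  imports Defs
begin

text \<open>A disturbing run restarts from \<open>\<psi>\<close> after every checkpoint, so the states at the
  checkpoints are exactly \<open>U\<^sub>u\<^sub>0 s\<^sub>0, U\<^sub>u\<^sub>1 \<psi>, U\<^sub>u\<^sub>2 \<psi>, \<dots>\<close>, where \<open>u\<^sub>0 u\<^sub>1 u\<^sub>2 \<dots>\<close> cuts \<open>w\<close> at the
  checkpoints; conversely every factorization of \<open>w\<close> into nonempty words \<open>u\<^sub>1, u\<^sub>2, \<dots>\<close> after
  \<open>u\<^sub>0\<close> defines checkpoints at its cut points. Hence a pair \<open>(\<psi>, n\<^sub>i)\<close> witnessing \<open>f\<^sub>D(w) > \<lambda>\<close>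
  is the same thing as a factorization whose overlaps stay above \<open>\<lambda>\<close>; the margin \<open>\<epsilon>\<close> is
  the gap between \<open>\<lambda>\<close> and the infimum of the overlaps over the checkpoints.\<close>

lemma cinner_matrix_vector_mult_left: "cinner (A *v x) y = cinner x (cadjoint A *v y)"
proof -
  have "cinner (A *v x) y = (\<Sum>i\<in>UNIV. \<Sum>j\<in>UNIV. cnj (A$i$j) * cnj (x$j) * y$i)"
    by (simp add: cinner_def matrix_vector_mult_def cnj_sum sum_distrib_right mult.assoc)
  also have "\<dots> = (\<Sum>j\<in>UNIV. \<Sum>i\<in>UNIV. cnj (A$i$j) * cnj (x$j) * y$i)"
    by (rule sum.swap)
  also have "\<dots> = cinner x (cadjoint A *v y)"
    by (simp add: cinner_def matrix_vector_mult_def cadjoint_def sum_distrib_left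
        mult.commute mult.left_commute)
  finally show ?thesis .
qed

lemma cinner_self_eq_norm_square: "cinner x x = complex_of_real ((norm x)\<^sup>2)"
proof -
  have "(norm x)\<^sup>2 = (\<Sum>i\<in>UNIV. (cmod (x$i))\<^sup>2)"
    by (simp add: norm_vec_def L2_set_def sum_nonneg)
  moreover have "cinner x x = (\<Sum>i\<in>UNIV. complex_of_real ((cmod (x$i))\<^sup>2))"
    by (simp add: cinner_def complex_norm_square mult.commute del: of_real_power)
  ultimately show ?thesis by (simp only: of_real_sum)
qed

lemma norm_cinner_le: "cmod (cinner x y) \<le> norm x * norm y"
proof -
  have "cmod (cinner x y) \<le> (\<Sum>i\<in>UNIV. cmod (cnj (x$i) * y$i))"
    unfolding cinner_def by (rule norm_sum)
  also have "\<dots> = (\<Sum>i\<in>UNIV. \<bar>cmod (x$i)\<bar> * \<bar>cmod (y$i)\<bar>)"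
    by (simp add: norm_mult)
  also have "\<dots> \<le> norm x * norm y"
    unfolding norm_vec_def by (rule L2_set_mult_ineq)
  finally show ?thesis .
qed

lemma unitary_norm_mult: "unitary A \<Longrightarrow> norm (A *v x) = norm x"
proof -
  assume "unitary A"
  then have "cinner (A *v x) (A *v x) = cinner x x"
    by (simp add: cinner_matrix_vector_mult_left matrix_vector_mul_assoc unitary_def)
  then have "(norm (A *v x))\<^sup>2 = (norm x)\<^sup>2"
    by (metis cinner_self_eq_norm_square of_real_eq_iff)
  then show ?thesis by (simp add: power2_eq_iff_nonneg)
qed

lemma less_INF_iff_uniformly_less:
  fixes g :: "'i \<Rightarrow> real"
  assumes "bdd_below (range g)"
  shows "c < (INF i. g i) \<longleftrightarrow> (\<exists>\<epsilon>>0. \<forall>i. c + \<epsilon> < g i)"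
proof
  assume less: "c < (INF i. g i)"
  have "c + ((INF i. g i) - c) / 2 < g i" for i
  proof -
    have "(INF i. g i) \<le> g i"
      using assms by (rule cINF_lower) simp
    then show ?thesis
      using less by (simp add: field_simps)
  qed
  then show "\<exists>\<epsilon>>0. \<forall>i. c + \<epsilon> < g i"
    using less by (intro exI[of _ "((INF i. g i) - c) / 2"]) auto
next
  assume "\<exists>\<epsilon>>0. \<forall>i. c + \<epsilon> < g i"
  then obtain \<epsilon> where "\<epsilon> > 0" "\<forall>i. c + \<epsilon> < g i" by blast
  then have "c + \<epsilon> \<le> (INF i. g i)"
    by (intro cINF_greatest) (auto intro: less_imp_le)
  with \<open>\<epsilon> > 0\<close> show "c < (INF i. g i)" by simp
qed

lemma run_word_Cons: "run_word U (a # x) v = run_word U x (U a *v v)"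
  by (simp add: run_word_def)

lemma norm_drun:
  assumes "\<forall>\<sigma>. unitary (U \<sigma>)" "norm s0 = 1" "norm psi = 1"
  shows "norm (drun U s0 w psi ns n) = 1"
  using assms by (induction n) (auto simp: unitary_norm_mult)

lemma drun_add_without_checkpoints:
  assumes "\<forall>j\<in>{k..<k + m}. j \<notin> range ns"
  shows "drun U s0 w psi ns (k + m) = run_word U (map w [k..<k + m]) (drun U s0 w psi ns k)"
  using assms by (induction m) (auto simp: run_word_def)

lemma drun_add_after_checkpoint:
  assumes "k \<in> range ns" "0 < m" "\<forall>j\<in>{k<..<k + m}. j \<notin> range ns"
  shows "drun U s0 w psi ns (k + m) = run_word U (map w [k..<k + m]) psi"
proof -
  obtain l where m: "m = Suc l"
    using assms(2) by (cases m) auto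
  have "drun U s0 w psi ns (k + m) = drun U s0 w psi ns (Suc k + l)"
    using m by simp
  also have "\<dots> = run_word U (map w [Suc k..<Suc k + l]) (drun U s0 w psi ns (Suc k))"
    using assms(3) m by (intro drun_add_without_checkpoints) auto
  also have "\<dots> = run_word U (map w [Suc k..<Suc k + l]) (U (w k) *v psi)"
    using assms(1) by simp
  also have "\<dots> = run_word U (map w [k..<k + m]) psi"
    using m by (simp add: run_word_Cons upt_conv_Cons del: upt_Suc)
  finally show ?thesis .
qed

lemma strict_mono_not_in_range_below_first:
  "strict_mono (ns :: nat \<Rightarrow> nat) \<Longrightarrow> j < ns 0 \<Longrightarrow> j \<notin> range ns"
  by (auto simp: strict_mono_less)

lemma strict_mono_not_in_range_between:
  assumes "strict_mono (ns :: nat \<Rightarrow> nat)" "ns i < j" "j < ns (Suc i)"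
  shows "j \<notin> range ns"
proof
  assume "j \<in> range ns"
  then obtain m where "j = ns m" by auto
  with assms have "i < m" "m < Suc i"
    by (simp_all add: strict_mono_less)
  then show False by simp
qed

definition checkpoint_overlap ::
    "('a \<Rightarrow> complex ^ 'n ^ 'n) \<Rightarrow> complex ^ 'n \<Rightarrow> (nat \<Rightarrow> 'a) \<Rightarrow> complex ^ 'n \<Rightarrow> (nat \<Rightarrow> nat)
      \<Rightarrow> nat \<Rightarrow> real" where
  "checkpoint_overlap U s0 w psi ns i = (cmod (cinner psi (drun U s0 w psi ns (ns i))))\<^sup>2"

definition checkpoint_segments :: "(nat \<Rightarrow> 'a) \<Rightarrow> (nat \<Rightarrow> nat) \<Rightarrow> nat \<Rightarrow> 'a list" where
  "checkpoint_segments w ns i =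
     (case i of 0 \<Rightarrow> map w [0..<ns 0] | Suc j \<Rightarrow> map w [ns j..<ns (Suc j)])"

definition concat_ends :: "(nat \<Rightarrow> 'a list) \<Rightarrow> nat \<Rightarrow> nat" where
  "concat_ends u n = length (concat (map u [0..<Suc n]))"

lemma checkpoint_overlap_bounds:
  assumes "\<forall>\<sigma>. unitary (U \<sigma>)" "norm s0 = 1" "norm psi = 1"
  shows "0 \<le> checkpoint_overlap U s0 w psi ns i" "checkpoint_overlap U s0 w psi ns i \<le> 1"
proof -
  have "cmod (cinner psi (drun U s0 w psi ns (ns i)))
      \<le> norm psi * norm (drun U s0 w psi ns (ns i))"
    by (rule norm_cinner_le)
  also have "\<dots> = 1"
    using assms by (simp add: norm_drun)
  finally show "checkpoint_overlap U s0 w psi ns i \<le> 1"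
    by (simp add: checkpoint_overlap_def power_le_one)
qed (simp add: checkpoint_overlap_def)

lemma drun_at_checkpoint:
  assumes "strict_mono ns"
  shows "drun U s0 w psi ns (ns i)
    = run_word U (checkpoint_segments w ns i) (if i = 0 then s0 else psi)"
proof (cases i)
  case 0
  have "drun U s0 w psi ns (0 + ns 0) = run_word U (map w [0..<0 + ns 0]) s0"
    using strict_mono_not_in_range_below_first[OF assms]
    by (subst drun_add_without_checkpoints) auto
  then show ?thesis
    using 0 by (simp add: checkpoint_segments_def)
next
  case (Suc j)
  have less: "ns j < ns (Suc j)"
    using assms by (simp add: strict_mono_less)
  have "drun U s0 w psi ns (ns j + (ns (Suc j) - ns j))
      = run_word U (map w [ns j..<ns j + (ns (Suc j) - ns j)]) psi"
    using less strict_mono_not_in_range_between[OF assms, of j]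
    by (intro drun_add_after_checkpoint) auto
  then show ?thesis
    using Suc less by (simp add: checkpoint_segments_def)
qed

lemma checkpoint_overlap_eq_f_MO_uv:
  "strict_mono ns \<Longrightarrow> checkpoint_overlap U s0 w psi ns i
     = f_MO_uv U (if i = 0 then s0 else psi) psi (checkpoint_segments w ns i)"
  by (simp add: checkpoint_overlap_def f_MO_uv_def drun_at_checkpoint)

lemma checkpoint_segments_nonempty:
  "strict_mono ns \<Longrightarrow> 0 < i \<Longrightarrow> checkpoint_segments w ns i \<noteq> []"
proof -
  assume "strict_mono ns" "0 < i"
  then obtain j where "i = Suc j" "ns j < ns (Suc j)"
    by (cases i) (auto simp: strict_mono_less)
  then show ?thesis
    by (simp add: checkpoint_segments_def)
qed

lemma is_concat_checkpoint_segments: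
  assumes "mono ns"
  shows "is_concat w (checkpoint_segments w ns)"
proof -
  have "concat (map (checkpoint_segments w ns) [0..<Suc n]) = map w [0..<ns n]" for n
  proof (induction n)
    case (Suc n)
    have "ns n \<le> ns (Suc n)"
      using assms by (simp add: monoD)
    have "concat (map (checkpoint_segments w ns) [0..<Suc (Suc n)])
        = concat (map (checkpoint_segments w ns) [0..<Suc n]) @ checkpoint_segments w ns (Suc n)"
      by simp
    also have "\<dots> = map w [0..<ns n] @ map w [ns n..<ns (Suc n)]"
      by (simp only: Suc.IH) (simp add: checkpoint_segments_def)
    also have "\<dots> = map w [0..<ns (Suc n)]"
      using \<open>ns n \<le> ns (Suc n)\<close> by (metis map_append upt_add_eq_append le0 le_add_diff_inverse)
    finally show ?case .
  qed (simp add: checkpoint_segments_def)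
  then show ?thesis
    by (simp add: is_concat_def)
qed

lemma strict_mono_concat_ends: "\<forall>i\<ge>1. u i \<noteq> [] \<Longrightarrow> strict_mono (concat_ends u)"
  by (simp add: strict_mono_Suc_iff concat_ends_def)

lemma checkpoint_segments_concat_ends:
  assumes "is_concat w u"
  shows "checkpoint_segments w (concat_ends u) = u"
proof
  fix i
  have prefix: "concat (map u [0..<Suc n]) = map w [0..<concat_ends u n]" for n
    using assms by (simp add: is_concat_def concat_ends_def Let_def)
  show "checkpoint_segments w (concat_ends u) i = u i"
  proof (cases i)
    case 0
    then show ?thesis
      using prefix[of 0] by (simp add: checkpoint_segments_def)
  next
    case (Suc j)
    have ends: "concat_ends u (Suc j) = concat_ends u j + length (u (Suc j))"
      by (simp add: concat_ends_def)
    have "concat (map u [0..<Suc (Suc j)]) = concat (map u [0..<Suc j]) @ u (Suc j)"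
      by simp
    then have "map w [0..<concat_ends u j] @ u (Suc j) = map w [0..<concat_ends u (Suc j)]"
      by (simp only: prefix)
    also have "\<dots> = map w [0..<concat_ends u j] @ map w [concat_ends u j..<concat_ends u (Suc j)]"
      unfolding ends by (simp add: upt_add_eq_append[of 0])
    finally show ?thesis
      using Suc by (simp add: checkpoint_segments_def)
  qed
qed

lemma checkpoints_iff_factorization:
  "(\<exists>ns. strict_mono ns \<and> (\<forall>i. \<mu> < checkpoint_overlap U s0 w psi ns i)) \<longleftrightarrow>
   (\<exists>u. is_concat w u \<and> u 0 \<in> L_MO_uv U s0 psi \<mu> \<and>
      (\<forall>i\<ge>1. u i \<in> L_MO_uv U psi psi \<mu> - {[]}))"
proof
  assume "\<exists>ns. strict_mono ns \<and> (\<forall>i. \<mu> < checkpoint_overlap U s0 w psi ns i)"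
  then obtain ns where ns: "strict_mono ns" "\<forall>i. \<mu> < checkpoint_overlap U s0 w psi ns i"
    by blast
  then have f_MO: "\<mu> < f_MO_uv U (if i = 0 then s0 else psi) psi (checkpoint_segments w ns i)" for i
    using ns(2)[rule_format, of i] by (simp add: checkpoint_overlap_eq_f_MO_uv)
  have "checkpoint_segments w ns i \<in> L_MO_uv U psi psi \<mu> - {[]}" if "i \<ge> 1" for i
    using f_MO[of i] that checkpoint_segments_nonempty[OF ns(1), of i] by (simp add: L_MO_uv_def)
  moreover have "checkpoint_segments w ns 0 \<in> L_MO_uv U s0 psi \<mu>"
    using f_MO[of 0] by (simp add: L_MO_uv_def)
  moreover have "is_concat w (checkpoint_segments w ns)"
    using ns(1) by (simp add: is_concat_checkpoint_segments strict_mono_mono)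
  ultimately show "\<exists>u. is_concat w u \<and> u 0 \<in> L_MO_uv U s0 psi \<mu> \<and>
      (\<forall>i\<ge>1. u i \<in> L_MO_uv U psi psi \<mu> - {[]})"
    by blast
next
  assume "\<exists>u. is_concat w u \<and> u 0 \<in> L_MO_uv U s0 psi \<mu> \<and>
      (\<forall>i\<ge>1. u i \<in> L_MO_uv U psi psi \<mu> - {[]})"
  then obtain u where u: "is_concat w u" "u 0 \<in> L_MO_uv U s0 psi \<mu>"
    "\<forall>i\<ge>1. u i \<in> L_MO_uv U psi psi \<mu> - {[]}"
    by blast
  then have "strict_mono (concat_ends u)"
    by (intro strict_mono_concat_ends) auto
  with u show "\<exists>ns. strict_mono ns \<and> (\<forall>i. \<mu> < checkpoint_overlap U s0 w psi ns i)"
    by (intro exI[of _ "concat_ends u"])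
      (auto simp: L_MO_uv_def checkpoint_overlap_eq_f_MO_uv checkpoint_segments_concat_ends)
qed

lemma mem_L_D_iff:
  assumes "\<forall>\<sigma>. unitary (U \<sigma>)" "norm s0 = 1" "0 \<le> lam"
  shows "w \<in> L_D U s0 F lam \<longleftrightarrow>
    (\<exists>\<epsilon>>0. \<exists>psi. psi \<in> F \<and> norm psi = 1 \<and>
       (\<exists>ns. strict_mono ns \<and> (\<forall>i. lam + \<epsilon> < checkpoint_overlap U s0 w psi ns i)))"
proof -
  define S where "S = {(INF i. checkpoint_overlap U s0 w psi ns i) | psi ns.
    psi \<in> F \<and> norm psi = 1 \<and> strict_mono ns}"
  have bdd_below: "bdd_below (range (checkpoint_overlap U s0 w psi ns))" if "norm psi = 1" for psi ns
    using checkpoint_overlap_bounds[OF assms(1,2) that] by (intro bdd_belowI) auto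
  have "x \<le> 1" if "x \<in> S" for x
  proof -
    obtain psi ns where "x = (INF i. checkpoint_overlap U s0 w psi ns i)" and "norm psi = 1"
      using \<open>x \<in> S\<close> by (auto simp: S_def)
    then have "x \<le> checkpoint_overlap U s0 w psi ns 0"
      using bdd_below by (simp add: cINF_lower)
    then show ?thesis
      using checkpoint_overlap_bounds(2)[OF assms(1,2) \<open>norm psi = 1\<close>, of w ns 0] by linarith
  qed
  then have "bdd_above (insert 0 S)"
    by (intro bdd_aboveI[of _ 1]) auto
  \<comment> \<open>\<open>0 \<le> lam\<close> discards the element \<open>0\<close> inserted into the supremum\<close>
  then have "w \<in> L_D U s0 F lam \<longleftrightarrow> (\<exists>x\<in>S. lam < x)"
    using assms(3) by (auto simp: L_D_def f_D_def checkpoint_overlap_def S_def less_cSup_iff)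
  also have "\<dots> \<longleftrightarrow> (\<exists>psi ns. psi \<in> F \<and> norm psi = 1 \<and> strict_mono ns \<and>
       lam < (INF i. checkpoint_overlap U s0 w psi ns i))"
    by (auto simp: S_def)
  also have "\<dots> \<longleftrightarrow> (\<exists>psi ns. psi \<in> F \<and> norm psi = 1 \<and> strict_mono ns \<and>
       (\<exists>\<epsilon>>0. \<forall>i. lam + \<epsilon> < checkpoint_overlap U s0 w psi ns i))"
    using less_INF_iff_uniformly_less[OF bdd_below] by blast
  finally show ?thesis
    by blast
qed

theorem proposition6:
  fixes U :: "'a::finite \<Rightarrow> complex ^ 'n ^ 'n"
    and s0 :: "complex ^ 'n"
    and F :: "(complex ^ 'n) set"
    and w :: "nat \<Rightarrow> 'a"
    and lam :: real
  assumes "\<forall>\<sigma>. unitary (U \<sigma>)"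
    and "norm s0 = 1"
    and "csubspace F"
    and "0 \<le> lam" and "lam < 1"
  shows "w \<in> L_D U s0 F lam \<longleftrightarrow>
    (\<exists>\<epsilon>>0. \<exists>psi. psi \<in> F \<and> norm psi = 1 \<and>
       (\<exists>u :: nat \<Rightarrow> 'a list. is_concat w u \<and>
          u 0 \<in> L_MO_uv U s0 psi (lam + \<epsilon>) \<and>
          (\<forall>i\<ge>1. u i \<in> L_MO_uv U psi psi (lam + \<epsilon>) - {[]})))"
  unfolding mem_L_D_iff[OF assms(1,2,4)] checkpoints_iff_factorization ..

end
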